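(* Let $m\ge 1$ and let $F_0=[1,m-1]\supseteq F_1\supseteq F_2$ be sets such that $G=F_0\cup(m+F_1)\cup(2m+F_2)$ is a gapset; let $g=|F_0|+|F_1|+|F_2|$ (the genus of $G$). Define $$\alpha_1(F)=(F_0\sqcup\{m\},F_1,F_2),\qquad \alpha_2(F)=(F_0\sqcup\{m\},F_1\sqcup\{m\},F_2).$$ Then $\alpha_1(F)$ and $\alpha_2(F)$ are gapset filtrations of multiplicity $m+1$ and depth at most $3$, of genus $g+1$ and $g+2$ respectively; that is, $H=[1,m]\cup((m+1)+F_1)\cup(2(m+1)+F_2)$ is a gapset of genus $g+1$ and $H\cup\{2m+1\}$ is a gapset of genus $g+2$.
   Context: A gapset is a finite set $G \subset \mathbb{N}_+$ such that for all $z \in G$, whenever $z=x+y$ with $x,y\in\mathbb{N}_+$, we have $x\in G$ or $y\in G$. Its multiplicity is the least $m\ge1$ with $m\notin G$, its genus is $|G|$, and its depth is $\lceil c/m\rceil$ where $c=\max G+1$ ($c=0$ if $G=\emptyset$). For $m\ge1$, an $m$-filtration is a finite sequence $(F_0,\dots,F_t)$ of sets with $F_0=[1,m-1]\supseteq F_1\supseteq\dots\supseteq F_t$; it is called a gapset filtration if $\tau(F)=\bigcup_i (im+F_i)$ is a gapset; the multiplicity, genus and depth of the gapset filtration are those of $\tau(F)$ (so the genus is $\sum_i|F_i|$ and the multiplicity is $m$). Here $[a,b]=\{z\in\mathbb{Z}:a\le z\le b\}$ and $k+A=\{k+a:a\in A\}$. *)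

theory Defs
  imports Complex_Main
begin

definition gapset :: "nat set \<Rightarrow> bool" where
  "gapset G \<longleftrightarrow> finite G \<and> 0 \<notin> G \<and>
     (\<forall>z\<in>G. \<forall>x y. 0 < x \<and> 0 < y \<and> z = x + y \<longrightarrow> x \<in> G \<or> y \<in> G)"

definition multiplicity :: "nat set \<Rightarrow> nat" where
  "multiplicity G = (LEAST m. 1 \<le> m \<and> m \<notin> G)"

definition genus :: "nat set \<Rightarrow> nat" where
  "genus G = card G"

definition conductor :: "nat set \<Rightarrow> nat" where
  "conductor G = (if G = {} then 0 else Max G + 1)"

definition depth :: "nat set \<Rightarrow> int" where
  "depth G = \<lceil>(real (conductor G)) / real (multiplicity G)\<rceil>"

definition m_filtration :: "nat \<Rightarrow> nat set list \<Rightarrow> bool" where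
  "m_filtration m F \<longleftrightarrow> F \<noteq> [] \<and> F ! 0 = {1..m-1} \<and>
     (\<forall>i. Suc i < length F \<longrightarrow> F ! (Suc i) \<subseteq> F ! i)"

definition tau :: "nat \<Rightarrow> nat set list \<Rightarrow> nat set" where
  "tau m F = (\<Union>i<length F. (\<lambda>a. i * m + a) ` (F ! i))"

definition gapset_filtration :: "nat \<Rightarrow> nat set list \<Rightarrow> bool" where
  "gapset_filtration m F \<longleftrightarrow> m_filtration m F \<and> gapset (tau m F)"

end

theory Submission
  imports Defs
begin

(* Passing from multiplicity m to m+1 shifts the block F_i to the right by i.  An element of the
   new set above 2m has the form 2(m+1)+f with f in F_2; if it splits as (m+1+a) + (m+1+b), then
   either a or b is 0, and F_2 \<subseteq> F_1 puts the other summand m+1+f in the set, or both are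
   positive and the old gapset condition for the splitting 2m+f = (m+a) + (m+b) gives a or b
   in F_1.  The gap 2m+1 can always be added, because every splitting of it has a summand at
   most m. *)

lemma m_filtration_nth_subset:
  assumes "m_filtration m F" and "i < length F"
  shows "F ! i \<subseteq> {1..m-1}"
  using assms(2)
proof (induction i)
  case 0
  then show ?case using assms(1) by (simp add: m_filtration_def)
next
  case (Suc i)
  then show ?case using assms(1) unfolding m_filtration_def by force
qed

lemma tau_subset:
  assumes "m_filtration k F"
  shows "tau k F \<subseteq> {1..<length F * k}"
proof
  fix x assume "x \<in> tau k F"
  then obtain i a where i: "i < length F" and a: "a \<in> F ! i" and x: "x = i * k + a"
    unfolding tau_def by blast
  have "a \<in> {1..k-1}" using m_filtration_nth_subset[OF assms i] a by blast
  then have "1 \<le> a" "a < k" by auto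
  moreover have "(i + 1) * k \<le> length F * k" using i by (intro mult_le_mono1) simp
  ultimately show "x \<in> {1..<length F * k}" using x by auto
qed

lemma finite_tau: "m_filtration k F \<Longrightarrow> finite (tau k F)"
  using tau_subset finite_subset by blast

lemma card_tau:
  assumes "m_filtration k F"
  shows "card (tau k F) = sum_list (map card F)"
proof -
  have block: "F ! i \<subseteq> {1..k-1}" if "i < length F" for i
    using m_filtration_nth_subset[OF assms that] .
  have key: "(i * k + a) div k = i" if "i < length F" "a \<in> F ! i" for i a
    using block[OF that(1)] that(2) by fastforce
  have "card (tau k F) = (\<Sum>i<length F. card ((\<lambda>a. i * k + a) ` (F ! i)))"
    unfolding tau_def
  proof (rule card_UN_disjoint)
    show "\<forall>i\<in>{..<length F}. finite ((\<lambda>a. i * k + a) ` (F ! i))"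
      using block finite_subset by blast
    show "\<forall>i\<in>{..<length F}. \<forall>j\<in>{..<length F}. i \<noteq> j \<longrightarrow>
        (\<lambda>a. i * k + a) ` (F ! i) \<inter> (\<lambda>a. j * k + a) ` (F ! j) = {}"
    proof (intro ballI impI equals0I)
      fix i j x
      assume "i \<noteq> j" and "x \<in> (\<lambda>a. i * k + a) ` (F ! i) \<inter> (\<lambda>a. j * k + a) ` (F ! j)"
        and "i \<in> {..<length F}" "j \<in> {..<length F}"
      then show False using key by (metis IntE imageE lessThan_iff)
    qed
  qed simp
  also have "\<dots> = (\<Sum>i<length F. card (F ! i))"
    by (simp add: card_image)
  also have "\<dots> = sum_list (map card F)"
    by (simp add: sum_list_sum_nth atLeast0LessThan)
  finally show ?thesis .
qed

lemma multiplicity_tau: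
  assumes "m_filtration k F" and "1 \<le> k"
  shows "multiplicity (tau k F) = k"
  unfolding multiplicity_def
proof (rule Least_equality)
  have "k \<notin> (\<lambda>a. i * k + a) ` (F ! i)" if "i < length F" for i
    using m_filtration_nth_subset[OF assms(1) that] by (cases i) (auto simp: subset_iff)
  then show "1 \<le> k \<and> k \<notin> tau k F"
    using assms(2) unfolding tau_def by blast
next
  have "{1..k-1} \<subseteq> tau k F"
    using assms(1) unfolding m_filtration_def tau_def by force
  then show "k \<le> y" if "1 \<le> y \<and> y \<notin> tau k F" for y
    using that by fastforce
qed

lemma depth_tau_le_length:
  assumes "m_filtration k F" and "1 \<le> k"
  shows "depth (tau k F) \<le> int (length F)"
proof -
  have "conductor (tau k F) \<le> length F * k"
    using tau_subset[OF assms(1)] finite_tau[OF assms(1)]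
    by (auto simp: conductor_def Suc_le_eq)
  then have "real (conductor (tau k F)) / real k \<le> real (length F)"
    using assms(2) by (simp add: divide_le_eq flip: of_nat_mult)
  then show ?thesis
    by (simp add: depth_def multiplicity_tau[OF assms] ceiling_le_iff)
qed

lemma tau_three: "tau k [A, B, C] = A \<union> (\<lambda>a. k + a) ` B \<union> (\<lambda>a. 2 * k + a) ` C"
proof -
  have "{..<length [A, B, C]} = {0, 1, 2}" by auto
  then show ?thesis unfolding tau_def by (auto simp: numeral_2_eq_2)
qed

lemma m_filtration_three_iff:
  "m_filtration m [A, B, C] \<longleftrightarrow> A = {1..m-1} \<and> B \<subseteq> A \<and> C \<subseteq> B"
  by (auto simp: m_filtration_def less_Suc_eq nth_Cons')

lemma gapset_insert:
  assumes "gapset G" and "0 < z"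
    and "\<And>x y. 0 < x \<Longrightarrow> 0 < y \<Longrightarrow> z = x + y \<Longrightarrow> x \<in> G \<or> y \<in> G"
  shows "gapset (insert z G)"
  using assms unfolding gapset_def by blast

lemma shifted_splitting:
  assumes F: "F1 \<subseteq> {1..m-1}" "F2 \<subseteq> F1" and G: "gapset (tau m [{1..m-1}, F1, F2])"
    and z: "z \<in> tau (m+1) [{1..m}, F1, F2]" and xy: "0 < x" "0 < y" "z = x + y"
  shows "x \<in> tau (m+1) [{1..m}, F1, F2] \<or> y \<in> tau (m+1) [{1..m}, F1, F2]"
    (is "x \<in> ?H \<or> y \<in> ?H")
proof (cases "x \<le> m \<or> y \<le> m")
  case True
  then show ?thesis using xy by (auto simp: tau_three)
next
  case False
  then have "m + 1 \<le> x" "m + 1 \<le> y" by auto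
  then obtain a b where x: "x = m + 1 + a" and y: "y = m + 1 + b"
    by (metis le_Suc_ex)
  have "z \<notin> {1..m} \<union> (\<lambda>a. (m+1) + a) ` F1"
    using F(1) x y xy(3) by auto
  then obtain f where f: "f \<in> F2" "z = 2 * (m+1) + f"
    using z by (auto simp: tau_three)
  then have ab: "a + b = f" using x y xy(3) by simp
  have "f \<in> F1" "f \<le> m - 1" using f F by auto
  consider "a = 0" | "b = 0" | "0 < a" "0 < b" by blast
  then show ?thesis
  proof cases
    case 1
    then show ?thesis using \<open>f \<in> F1\<close> ab y by (auto simp: tau_three)
  next
    case 2
    then show ?thesis using \<open>f \<in> F1\<close> ab x by (auto simp: tau_three)
  next
    case 3
    let ?G = "tau m [{1..m-1}, F1, F2]"
    have "2 * m + f \<in> ?G" using f by (auto simp: tau_three)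
    moreover have "2 * m + f = (m + a) + (m + b)" using ab by simp
    ultimately have "m + a \<in> ?G \<or> m + b \<in> ?G"
      using G 3 unfolding gapset_def by blast
    moreover have "a < m" "b < m" using ab \<open>f \<le> m - 1\<close> 3 by auto
    ultimately have "a \<in> F1 \<or> b \<in> F1" using F by (auto simp: tau_three)
    then show ?thesis using x y by (auto simp: tau_three)
  qed
qed

lemma gapset_filtration_alpha1:
  assumes "gapset_filtration m [{1..m-1}, F1, F2]"
  shows "gapset_filtration (m+1) [{1..m}, F1, F2]"
proof -
  have F: "F1 \<subseteq> {1..m-1}" "F2 \<subseteq> F1" and G: "gapset (tau m [{1..m-1}, F1, F2])"
    using assms by (auto simp: gapset_filtration_def m_filtration_three_iff)
  have filtration: "m_filtration (m+1) [{1..m}, F1, F2]"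
    using F by (auto simp: m_filtration_three_iff subset_iff)
  then have "finite (tau (m+1) [{1..m}, F1, F2])" "0 \<notin> tau (m+1) [{1..m}, F1, F2]"
    using finite_tau tau_subset by fastforce+
  then show ?thesis
    using filtration shifted_splitting[OF F G] unfolding gapset_filtration_def gapset_def by blast
qed

lemma gapset_filtration_alpha2:
  assumes "1 \<le> m" and "gapset_filtration m [{1..m-1}, F1, F2]"
  shows "gapset_filtration (m+1) [{1..m}, insert m F1, F2]"
proof -
  let ?H = "tau (m+1) [{1..m}, F1, F2]"
  have H: "gapset_filtration (m+1) [{1..m}, F1, F2]"
    using gapset_filtration_alpha1[OF assms(2)] .
  then have "F1 \<subseteq> {1..m}" "F2 \<subseteq> F1"
    by (auto simp: gapset_filtration_def m_filtration_three_iff)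
  then have filtration: "m_filtration (m+1) [{1..m}, insert m F1, F2]"
    using assms(1) by (auto simp: m_filtration_three_iff)
  have "tau (m+1) [{1..m}, insert m F1, F2] = insert (2 * m + 1) ?H"
    by (auto simp: tau_three)
  moreover have "gapset (insert (2 * m + 1) ?H)"
  proof (rule gapset_insert)
    show "gapset ?H" using H by (simp add: gapset_filtration_def)
    show "x \<in> ?H \<or> y \<in> ?H" if "0 < x" "0 < y" "2 * m + 1 = x + y" for x y
      using that by (auto simp: tau_three)
  qed simp
  ultimately show ?thesis
    using filtration by (simp add: gapset_filtration_def)
qed

theorem mainTheorem11:
  fixes m :: nat and F1 F2 :: "nat set"
  assumes hm: "1 \<le> m"
    and hF: "gapset_filtration m [{1..m-1}, F1, F2]"
  shows
    "let g = card {1..m-1} + card F1 + card F2;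
         A1 = [{1..m-1} \<union> {m}, F1, F2];
         A2 = [{1..m-1} \<union> {m}, F1 \<union> {m}, F2];
         H = {1..m} \<union> (\<lambda>a. (m+1) + a) ` F1 \<union> (\<lambda>a. 2*(m+1) + a) ` F2
     in gapset_filtration (m+1) A1 \<and> multiplicity (tau (m+1) A1) = m+1
          \<and> depth (tau (m+1) A1) \<le> 3 \<and> genus (tau (m+1) A1) = g + 1
      \<and> gapset_filtration (m+1) A2 \<and> multiplicity (tau (m+1) A2) = m+1
          \<and> depth (tau (m+1) A2) \<le> 3 \<and> genus (tau (m+1) A2) = g + 2
      \<and> gapset H \<and> card H = g + 1
      \<and> gapset (H \<union> {2*m+1}) \<and> card (H \<union> {2*m+1}) = g + 2"
proof -
  define A1 where "A1 = [{1..m}, F1, F2]"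
  define A2 where "A2 = [{1..m}, insert m F1, F2]"
  have GF: "gapset_filtration (m+1) A1" "gapset_filtration (m+1) A2"
    unfolding A1_def A2_def using gapset_filtration_alpha1[OF hF] gapset_filtration_alpha2[OF hm hF] .
  then have filtration: "m_filtration (m+1) A1" "m_filtration (m+1) A2"
    and gapsets: "gapset (tau (m+1) A1)" "gapset (tau (m+1) A2)"
    by (simp_all add: gapset_filtration_def)
  have F1: "F1 \<subseteq> {1..m-1}"
    using hF by (simp add: gapset_filtration_def m_filtration_three_iff)
  then have "m \<notin> F1" by (auto simp: subset_iff)
  moreover have "finite F1" using F1 finite_subset by blast
  ultimately have genus: "genus (tau (m+1) A1) = m + card F1 + card F2"
    "genus (tau (m+1) A2) = m + card F1 + card F2 + 1"
    unfolding genus_def card_tau[OF filtration(1)] card_tau[OF filtration(2)]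
    by (simp_all add: A1_def A2_def)
  have "{1..m-1} \<union> {m} = {1..m}" using hm by auto
  moreover have "{1..m} \<union> (\<lambda>a. (m+1) + a) ` F1 \<union> (\<lambda>a. 2*(m+1) + a) ` F2 = tau (m+1) A1"
    "tau (m+1) A1 \<union> {2*m+1} = tau (m+1) A2"
    by (auto simp: A1_def A2_def tau_three)
  ultimately show ?thesis
    using GF gapsets genus hm multiplicity_tau[OF filtration(1)] multiplicity_tau[OF filtration(2)]
      depth_tau_le_length[OF filtration(1)] depth_tau_le_length[OF filtration(2)]
    by (simp add: Let_def A1_def A2_def genus_def)
qed

end
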